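(* Let $\eta>2$, $\lambda_b,\lambda_u>0$, $\bar\sigma_2^2>0$, $m>0$, $\theta>0$, $m_0=\lceil m\rceil$, $a_m=m\,\Gamma(1+m)^{-1/m}$, and for $k=1,\dots,m_0$ let $$H_k=\frac{4^{1/\eta}}{\sqrt\pi}\Gamma\!\left(1-\tfrac{2}{\eta}\right)\Gamma\!\left(\tfrac12+\tfrac{2}{\eta}\right)\left(\bar\sigma_2^2\frac{k a_m}{m\theta}\right)^{2/\eta},\qquad G_k(\tau)=\lambda_b+\lambda_u H_k\tau^{2/\eta}\ (\tau\ge0).$$ Define $$F_\gamma(\tau)=1-\lambda_b\sum_{k=1}^{m_0}(-1)^{k+1}\binom{m_0}{k}\frac{1}{G_k(\tau)}.$$ Then $$\lim_{\tau\to\infty}\Big[\log(1+\tau)F_\gamma(\tau)-\log(1+\tau)\Big]=0.$$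
   Context: $\Gamma$ is the Gamma function and $\lceil\cdot\rceil$ the ceiling. In the paper $F_\gamma$ is the (approximate) CDF of the SIR of uplink CUMA, with $\theta=\theta_S(1)$ the Gamma scale parameter of the desired signal power at unit distance; for the claim all listed quantities are arbitrary positive constants. *)

theory Defs
  imports "HOL-Analysis.Analysis"
begin

definition cuma_a :: "real \<Rightarrow> real" where
  "cuma_a m = m * Gamma (1 + m) powr (- 1 / m)"

definition cuma_H :: "real \<Rightarrow> real \<Rightarrow> real \<Rightarrow> real \<Rightarrow> nat \<Rightarrow> real" where
  "cuma_H \<eta> \<sigma>2 m \<theta> k =
     4 powr (1 / \<eta>) / sqrt pi * Gamma (1 - 2 / \<eta>) * Gamma (1/2 + 2 / \<eta>)
     * (\<sigma>2 * (real k * cuma_a m) / (m * \<theta>)) powr (2 / \<eta>)"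

definition cuma_G :: "real \<Rightarrow> real \<Rightarrow> real \<Rightarrow> real \<Rightarrow> real \<Rightarrow> real \<Rightarrow> nat \<Rightarrow> real \<Rightarrow> real" where
  "cuma_G \<eta> lb lu \<sigma>2 m \<theta> k \<tau> = lb + lu * cuma_H \<eta> \<sigma>2 m \<theta> k * \<tau> powr (2 / \<eta>)"

definition cuma_F :: "real \<Rightarrow> real \<Rightarrow> real \<Rightarrow> real \<Rightarrow> real \<Rightarrow> real \<Rightarrow> real \<Rightarrow> real" where
  "cuma_F \<eta> lb lu \<sigma>2 m \<theta> \<tau> =
     1 - lb * (\<Sum>k = 1..nat \<lceil>m\<rceil>.
            (-1) ^ (k + 1) * real (nat \<lceil>m\<rceil> choose k) / cuma_G \<eta> lb lu \<sigma>2 m \<theta> k \<tau>)"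

end

theory Submission
  imports Defs "HOL-Real_Asymp.Real_Asymp"
begin

(* Every G_k grows like a positive multiple of \<tau> powr (2/\<eta>), so ln (1 + \<tau>) / G_k \<tau> tends to 0;
   and ln (1 + \<tau>) * (F \<tau> - 1) is a fixed finite linear combination of these quotients. *)

lemma tendsto_ln_div_powr_at_top:
  fixes a b p :: real
  assumes "a > 0" "b > 0" "p > 0"
  shows "((\<lambda>x. ln (1 + x) / (a + b * x powr p)) \<longlongrightarrow> 0) at_top"
  using assms by real_asymp

lemma cuma_a_pos:
  assumes "m > 0"
  shows "cuma_a m > 0"
proof -
  have "Gamma (1 + m) > 0"
    using assms by (intro Gamma_real_pos) simp
  then have "Gamma (1 + m) powr (- 1 / m) > 0"
    by simp
  then show ?thesis
    unfolding cuma_a_def using assms by simp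
qed

lemma cuma_H_pos:
  assumes "\<eta> > 2" "\<sigma>2 > 0" "m > 0" "\<theta> > 0" "k \<ge> 1"
  shows "cuma_H \<eta> \<sigma>2 m \<theta> k > 0"
proof -
  have "0 < 1 - 2 / \<eta>" "0 < 1/2 + 2 / \<eta>"
    using assms(1) by (simp_all add: field_simps)
  then have "Gamma (1 - 2 / \<eta>) > 0" "Gamma (1/2 + 2 / \<eta>) > 0"
    using Gamma_real_pos by blast+
  moreover have "\<sigma>2 * (real k * cuma_a m) / (m * \<theta>) > 0"
    using assms cuma_a_pos[of m] by simp
  then have "(\<sigma>2 * (real k * cuma_a m) / (m * \<theta>)) powr (2 / \<eta>) > 0"
    by (metis powr_gt_zero order_less_irrefl)
  ultimately show ?thesis
    unfolding cuma_H_def by (intro mult_pos_pos divide_pos_pos) simp_all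
qed

lemma ln_mult_cuma_F_minus_ln:
  "ln (1 + \<tau>) * cuma_F \<eta> lb lu \<sigma>2 m \<theta> \<tau> - ln (1 + \<tau>) =
     - lb * (\<Sum>k = 1..nat \<lceil>m\<rceil>. (-1) ^ (k + 1) * real (nat \<lceil>m\<rceil> choose k) *
        (ln (1 + \<tau>) / cuma_G \<eta> lb lu \<sigma>2 m \<theta> k \<tau>))"
  unfolding cuma_F_def
  by (simp add: algebra_simps sum_distrib_left sum_distrib_right sum_negf[symmetric])

lemma tendsto_ln_div_cuma_G:
  assumes "\<eta> > 2" "lb > 0" "lu > 0" "\<sigma>2 > 0" "m > 0" "\<theta> > 0" "k \<ge> 1"
  shows "((\<lambda>\<tau>. ln (1 + \<tau>) / cuma_G \<eta> lb lu \<sigma>2 m \<theta> k \<tau>) \<longlongrightarrow> 0) at_top"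
proof -
  have "lu * cuma_H \<eta> \<sigma>2 m \<theta> k > 0"
    using assms cuma_H_pos by simp
  moreover have "2 / \<eta> > 0"
    using assms(1) by simp
  ultimately show ?thesis
    unfolding cuma_G_def by (rule tendsto_ln_div_powr_at_top[OF assms(2)])
qed

theorem lemma4:
  fixes \<eta> lb lu \<sigma>2 m \<theta> :: real
  assumes "\<eta> > 2" and "lb > 0" and "lu > 0" and "\<sigma>2 > 0" and "m > 0" and "\<theta> > 0"
  shows "((\<lambda>\<tau>. ln (1 + \<tau>) * cuma_F \<eta> lb lu \<sigma>2 m \<theta> \<tau> - ln (1 + \<tau>)) \<longlongrightarrow> 0) at_top"
proof -
  define N where "N = nat \<lceil>m\<rceil>"
  have "((\<lambda>\<tau>. - lb * (\<Sum>k = 1..N. (-1) ^ (k + 1) * real (N choose k) *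
          (ln (1 + \<tau>) / cuma_G \<eta> lb lu \<sigma>2 m \<theta> k \<tau>)))
        \<longlongrightarrow> - lb * (\<Sum>k = 1..N. (-1) ^ (k + 1) * real (N choose k) * 0)) at_top"
    using assms by (intro tendsto_intros tendsto_sum tendsto_ln_div_cuma_G) auto
  then show ?thesis
    by (simp add: ln_mult_cuma_F_minus_ln N_def)
qed

end
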